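(* Let $m_1=m_2=1$, $a>0$, $c\in\mathbb{C}\setminus\{0\}$, and consider the Dirac-type system $y'(x,z)=i(zJ+JV(x))y(x,z)$ on $[0,\infty)$ with $J=\operatorname{diag}(1,-1)$, $V=\begin{bmatrix}0&v\\ \overline v&0\end{bmatrix}$ and $v(x)=ci$ for $x\in[0,a]$, $v(x)=0$ for $x>a$. Then its Weyl–Titchmarsh function is $\widetilde\varphi(z,c)=\psi(z,|c|^2)$, where \[ \psi(z,\lambda)=i\,\overline c\,\frac{1-e^{2iaq(z,\lambda)}}{z+q(z,\lambda)-(z-q(z,\lambda))e^{2iaq(z,\lambda)}},\qquad q(z,\lambda)=(z^2-\lambda)^{1/2}, \] for $\Im z>0$, the branch of the square root being chosen with $\Im\big((z^2-\lambda)^{1/2}\big)>0$.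
   Context: With $u(x,z)$ the $2\times2$ fundamental solution satisfying $u(0,z)=I_2$, the Weyl–Titchmarsh function is the unique function $\widetilde\varphi(z,c)$ holomorphic in $\mathbb{C}_+$ such that $u(\cdot,z)\begin{bmatrix}1\\ \widetilde\varphi(z,c)\end{bmatrix}\in \big[L^2((0,\infty))\big]^2$. *)

theory Defs
  imports "HOL-Analysis.Analysis"
begin

definition Jm :: "complex^2^2" where
  "Jm = (\<chi> i j. if i = j then (if i = 1 then 1 else -1) else 0)"

definition vpot :: "complex \<Rightarrow> real \<Rightarrow> real \<Rightarrow> complex" where
  "vpot c a x = (if 0 \<le> x \<and> x \<le> a then c * \<i> else 0)"

definition Vm :: "complex \<Rightarrow> real \<Rightarrow> real \<Rightarrow> complex^2^2" where
  "Vm c a x = (\<chi> i j. if i = j then 0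
                 else if i = 1 then vpot c a x else cnj (vpot c a x))"

definition dirac_coeff :: "complex \<Rightarrow> real \<Rightarrow> complex \<Rightarrow> real \<Rightarrow> complex^2^2" where
  "dirac_coeff c a z x = (\<chi> i j. \<i> * (z * Jm $ i $ j + (Jm ** Vm c a x) $ i $ j))"

text \<open>Fundamental solution u(x,z) on [0,\<infinity>) with u(0,z) = I:
  continuous (absolutely continuous) in x and satisfying the equation
  u' = i(zJ+JV)u at every x \<ge> 0 except at the jump point a of V.\<close>
definition fundamental_solution ::
  "(complex \<Rightarrow> real \<Rightarrow> complex^2^2) \<Rightarrow> real \<Rightarrow> (real \<Rightarrow> complex \<Rightarrow> complex^2^2) \<Rightarrow> bool" where
  "fundamental_solution A a u \<longleftrightarrow>
     (\<forall>z. u 0 z = mat 1 \<and>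
          continuous_on {0..} (\<lambda>x. u x z) \<and>
          (\<forall>x. 0 \<le> x \<and> x \<noteq> a \<longrightarrow>
             ((\<lambda>t. u t z) has_vector_derivative (A z x ** u x z)) (at x within {0..})))"

definition square_integrable_on :: "(real \<Rightarrow> complex^2) \<Rightarrow> real set \<Rightarrow> bool" where
  "square_integrable_on f S \<longleftrightarrow>
     set_borel_measurable lborel S f \<and> set_integrable lborel S (\<lambda>x. (norm (f x))\<^sup>2)"

definition weyl_property :: "(real \<Rightarrow> complex \<Rightarrow> complex^2^2) \<Rightarrow> (complex \<Rightarrow> complex) \<Rightarrow> bool" where
  "weyl_property u \<phi> \<longleftrightarrow>
     \<phi> holomorphic_on {z. Im z > 0} \<and>
     (\<forall>z. Im z > 0 \<longrightarrow>
        square_integrable_on (\<lambda>x. u x z *v vector [1, \<phi> z]) {0<..})"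

definition qroot :: "complex \<Rightarrow> real \<Rightarrow> complex" where
  "qroot z lam = (THE w. w\<^sup>2 = z\<^sup>2 - of_real lam \<and> Im w > 0)"

definition psi :: "complex \<Rightarrow> real \<Rightarrow> complex \<Rightarrow> real \<Rightarrow> complex" where
  "psi c a z lam = (let q = qroot z lam; e = exp (2 * \<i> * of_real a * q) in
      \<i> * cnj c * (1 - e) / (z + q - (z - q) * e))"

end

(*
  For Im z > 0 the coefficient matrix is constant on each of [0, a] and (a, oo).
  Beyond a the system is diagonal, so u(x) [1, p] has first component decaying
  like exp (- Im z x) and second component growing like exp (Im z x): it is square
  integrable exactly when its second component vanishes at x = a. On [0, a] the
  constant matrix has eigenvalues +-iq with q^2 = z^2 - |c|^2, and pairing the
  solution with the corresponding left eigenvectors expresses that second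
  component at a through p. Setting it to zero gives the unique value p = psi,
  and the branch Im q > 0 makes the denominator of psi nonzero, so psi is
  holomorphic in the upper half-plane.
*)

theory Submission
  imports Defs
begin

lemma Re_csqrt_pos:
  assumes "w \<notin> \<real>\<^sub>\<le>\<^sub>0"
  shows "Re (csqrt w) > 0"
proof (rule ccontr)
  define r where "r = Im (csqrt w)"
  assume "\<not> Re (csqrt w) > 0"
  then have "Re (csqrt w) = 0"
    using Re_csqrt[of w] by linarith
  then have "w = of_real (- r\<^sup>2)"
    unfolding r_def by (subst power2_csqrt[symmetric]) (simp add: complex_eq_iff power2_eq_square)
  then have "w \<in> \<real>\<^sub>\<le>\<^sub>0"
    by (metis nonpos_Reals_of_real_iff neg_le_0_iff_le zero_le_power2)
  with assms show False ..
qed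

lemma diff_power2_notin_nonpos_Reals:
  fixes z :: complex and lam :: real
  assumes "Im z > 0" "lam \<ge> 0"
  shows "of_real lam - z\<^sup>2 \<notin> \<real>\<^sub>\<le>\<^sub>0"
proof
  assume "of_real lam - z\<^sup>2 \<in> \<real>\<^sub>\<le>\<^sub>0"
  then have re: "lam - (Re z)\<^sup>2 + (Im z)\<^sup>2 \<le> 0" and im: "Re z * Im z = 0"
    by (auto simp: complex_nonpos_Reals_iff power2_eq_square)
  from im have "Re z = 0" using assms by simp
  with re assms show False by (smt (verit) zero_less_power2)
qed

lemma qroot_eq_csqrt:
  fixes z :: complex and lam :: real
  assumes "Im z > 0" "lam \<ge> 0"
  shows "qroot z lam = \<i> * csqrt (of_real lam - z\<^sup>2)"
  unfolding qroot_def
proof (rule the_equality)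
  let ?r = "\<i> * csqrt (of_real lam - z\<^sup>2)"
  have Im_r: "Im ?r > 0"
    using Re_csqrt_pos[OF diff_power2_notin_nonpos_Reals[OF assms]] by simp
  have r2: "?r\<^sup>2 = z\<^sup>2 - of_real lam" by (simp add: power_mult_distrib)
  then show "?r\<^sup>2 = z\<^sup>2 - of_real lam \<and> Im ?r > 0" using Im_r by simp
  fix w assume w: "w\<^sup>2 = z\<^sup>2 - of_real lam \<and> Im w > 0"
  have "(w - ?r) * (w + ?r) = w\<^sup>2 - ?r\<^sup>2"
    by (simp add: algebra_simps power2_eq_square)
  then have "(w - ?r) * (w + ?r) = 0"
    using w r2 by simp
  then have "w = ?r \<or> w = - ?r" by (auto simp: eq_neg_iff_add_eq_0)
  then show "w = ?r" using w Im_r by auto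
qed

lemma
  fixes z :: complex and lam :: real
  assumes "Im z > 0" "lam \<ge> 0"
  shows qroot_power2: "(qroot z lam)\<^sup>2 = z\<^sup>2 - of_real lam"
    and Im_qroot_pos: "Im (qroot z lam) > 0"
  using Re_csqrt_pos[OF diff_power2_notin_nonpos_Reals[OF assms]]
  by (simp_all add: qroot_eq_csqrt[OF assms] power_mult_distrib)

lemma cmod_diff_less_cmod_add:
  fixes z q :: complex
  assumes "Im z > 0" "Im q > 0" "Im (q\<^sup>2) = Im (z\<^sup>2)"
  shows "cmod (z - q) < cmod (z + q)"
proof -
  have "Re q * Im q = Re z * Im z"
    using assms(3) by (simp add: power2_eq_square mult.commute)
  then have "(Re z * Re q) * (Im z * Im q) = (Re q * Im q)\<^sup>2"
    by (simp add: power2_eq_square algebra_simps)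
  then have "Re z * Re q \<ge> 0"
    using assms(1,2) by (metis zero_le_power2 zero_le_mult_iff mult_pos_pos not_le)
  moreover have "(cmod (z + q))\<^sup>2 - (cmod (z - q))\<^sup>2 = 4 * (Re z * Re q + Im z * Im q)"
    by (simp only: cmod_power2) (simp add: power2_eq_square algebra_simps)
  ultimately have "(cmod (z - q))\<^sup>2 < (cmod (z + q))\<^sup>2"
    using assms(1,2) by (smt (verit) mult_pos_pos)
  then show ?thesis by (simp add: power_less_imp_less_base)
qed

lemma psi_denominator_nonzero:
  fixes z q :: complex and a :: real
  assumes "Im z > 0" "Im q > 0" "Im (q\<^sup>2) = Im (z\<^sup>2)" "a > 0"
  shows "z + q - (z - q) * exp (2 * \<i> * of_real a * q) \<noteq> 0"
proof
  assume "z + q - (z - q) * exp (2 * \<i> * of_real a * q) = 0"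
  then have "cmod (z + q) = cmod (z - q) * norm (exp (2 * \<i> * of_real a * q))"
    by (metis eq_iff_diff_eq_0 norm_mult)
  also have "\<dots> \<le> cmod (z - q)"
    using assms by (simp add: norm_exp_eq_Re mult_left_le)
  finally show False
    using cmod_diff_less_cmod_add[OF assms(1-3)] by simp
qed

lemma psi_holomorphic:
  fixes a lam :: real
  assumes "a > 0" "lam \<ge> 0"
  shows "(\<lambda>z. psi c a z lam) holomorphic_on {z. Im z > 0}"
proof -
  let ?q = "\<lambda>z. \<i> * csqrt (of_real lam - z\<^sup>2)"
  let ?e = "\<lambda>z. exp (2 * \<i> * of_real a * ?q z)"
  have "(\<lambda>z. \<i> * cnj c * (1 - ?e z) / (z + ?q z - (z - ?q z) * ?e z))
          holomorphic_on {z. Im z > 0}"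
    using diff_power2_notin_nonpos_Reals[OF _ assms(2)]
      psi_denominator_nonzero[OF _ Im_qroot_pos[OF _ assms(2)] _ assms(1)]
      qroot_power2[OF _ assms(2)] qroot_eq_csqrt[OF _ assms(2)]
    by (auto intro!: holomorphic_intros)
  then show ?thesis
    by (rule holomorphic_transform) (simp add: psi_def Let_def qroot_eq_csqrt assms(2))
qed

lemma bounded_linear_matrix_vector_mult_left:
  "bounded_linear (\<lambda>M::'a::{euclidean_space,real_algebra_1}^'n^'m. M *v w)"
proof -
  have "linear (\<lambda>M::'a^'n^'m. M *v w)"
    by (rule linearI)
       (auto simp: matrix_vector_mult_def sum.distrib vec_eq_iff algebra_simps scaleR_sum_right)
  then show ?thesis by (simp add: linear_conv_bounded_linear)
qed

lemma bounded_linear_solution_exp: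
  fixes y :: "real \<Rightarrow> 'a::real_normed_vector" and f :: "'a \<Rightarrow> complex"
  assumes f: "bounded_linear f" and "s \<le> t" and y: "continuous_on {s..t} y"
    and dy: "\<And>x. x \<in> {s<..<t} \<Longrightarrow> (y has_vector_derivative Y x) (at x within {s..t})"
    and eigen: "\<And>x. x \<in> {s<..<t} \<Longrightarrow> f (Y x) = \<mu> * f (y x)"
  shows "f (y t) = exp (\<mu> * of_real (t - s)) * f (y s)"
proof -
  define g where "g x = exp (\<mu> * (of_real s - of_real x)) * f (y x)" for x
  have g_const: "(g has_derivative (\<lambda>_. 0)) (at x within {s..t})"
    if x: "x \<in> {s..t} - {s, t}" for x
  proof -
    have "((\<lambda>x. exp (\<mu> * (of_real s - of_real x))) has_vector_derivative
            - \<mu> * exp (\<mu> * (of_real s - of_real x))) (at x within {s..t})"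
      by (rule has_vector_derivative_real_field) (auto intro!: derivative_eq_intros)
    moreover have "((\<lambda>x. f (y x)) has_vector_derivative f (Y x)) (at x within {s..t})"
      using bounded_linear.has_vector_derivative[OF f dy] x by auto
    ultimately have "(g has_vector_derivative
        exp (\<mu> * (of_real s - of_real x)) * f (Y x)
        + - \<mu> * exp (\<mu> * (of_real s - of_real x)) * f (y x))
        (at x within {s..t})"
      unfolding g_def by (rule has_vector_derivative_mult)
    moreover have "exp (\<mu> * (of_real s - of_real x)) * f (Y x)
        + - \<mu> * exp (\<mu> * (of_real s - of_real x)) * f (y x) = 0"
      using eigen x by simp
    ultimately show ?thesis
      by (simp add: has_vector_derivative_def)
  qed
  have g_cont: "continuous_on {s..t} g"
    unfolding g_def
    by (intro continuous_intros bounded_linear.continuous_on[OF f y])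
  have "g t = g s"
    by (rule has_derivative_zero_unique_strong_interval
          [where k = "{s, t}", OF _ g_cont refl g_const])
       (use \<open>s \<le> t\<close> in auto)
  moreover have "g s = f (y s)"
    by (simp add: g_def)
  moreover have "exp (\<mu> * of_real (t - s)) * exp (\<mu> * (of_real s - of_real t)) = 1"
    by (simp add: algebra_simps flip: exp_add)
  then have "f (y t) = exp (\<mu> * of_real (t - s)) * g t"
    unfolding g_def by (metis mult.assoc mult_1)
  ultimately show ?thesis
    by simp
qed

lemma fundamental_solution_continuous_on:
  assumes "fundamental_solution A a u"
  shows "continuous_on {0..} (\<lambda>x. u x z *v w)"
proof -
  have "continuous_on {0..} (\<lambda>x. u x z)"
    using assms by (simp add: fundamental_solution_def)
  then show ?thesis
    by (rule bounded_linear.continuous_on[OF bounded_linear_matrix_vector_mult_left])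
qed

lemma fundamental_solution_on_interval:
  assumes fs: "fundamental_solution A a u" and "0 \<le> s" and "a \<notin> {s<..<t}"
  shows "continuous_on {s..t} (\<lambda>x. u x z *v w)"
    and "x \<in> {s<..<t} \<Longrightarrow>
           ((\<lambda>x. u x z *v w) has_vector_derivative A z x *v (u x z *v w)) (at x within {s..t})"
proof -
  show "continuous_on {s..t} (\<lambda>x. u x z *v w)"
    by (rule continuous_on_subset[OF fundamental_solution_continuous_on[OF fs]])
       (use \<open>0 \<le> s\<close> in auto)
  assume "x \<in> {s<..<t}"
  then have "0 \<le> x" "x \<noteq> a"
    using assms(2,3) by auto
  then have "((\<lambda>x. u x z) has_vector_derivative A z x ** u x z) (at x within {0..})"
    using fs by (simp add: fundamental_solution_def)
  from bounded_linear.has_vector_derivative[OF bounded_linear_matrix_vector_mult_left this]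
  have "((\<lambda>x. u x z *v w) has_vector_derivative A z x *v (u x z *v w)) (at x within {0..})"
    by (simp add: matrix_vector_mul_assoc)
  then show "((\<lambda>x. u x z *v w) has_vector_derivative A z x *v (u x z *v w)) (at x within {s..t})"
    by (rule has_vector_derivative_within_subset) (use \<open>0 \<le> s\<close> in auto)
qed

lemma dirac_coeff_inside:
  assumes "0 \<le> x" "x \<le> a"
  shows "(dirac_coeff c a z x *v v) $ 1 = \<i> * z * v $ 1 - c * v $ 2"
    and "(dirac_coeff c a z x *v v) $ 2 = - cnj c * v $ 1 - \<i> * z * v $ 2"
  using assms
  by (simp_all add: dirac_coeff_def Jm_def Vm_def vpot_def matrix_matrix_mult_def
      matrix_vector_mult_def sum_2 algebra_simps)

lemma dirac_coeff_outside:
  assumes "a < x"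
  shows "(dirac_coeff c a z x *v v) $ 1 = \<i> * z * v $ 1"
    and "(dirac_coeff c a z x *v v) $ 2 = - \<i> * z * v $ 2"
  using assms
  by (simp_all add: dirac_coeff_def Jm_def Vm_def vpot_def matrix_matrix_mult_def
      matrix_vector_mult_def sum_2)

text \<open>The functional \<open>v \<mapsto> cnj c v\<^sub>1 + \<i> (z - q) v\<^sub>2\<close> is a left eigenvector, with eigenvalue
  \<open>\<i> q\<close>, of the coefficient matrix \<open>[[\<i> z, - c], [- cnj c, - \<i> z]]\<close> on \<open>[0, a]\<close>.\<close>

lemma dirac_solution_inside:
  fixes u :: "real \<Rightarrow> complex \<Rightarrow> complex^2^2"
  assumes fs: "fundamental_solution (dirac_coeff c a) a u" and "a \<ge> 0"
    and q: "q\<^sup>2 = z\<^sup>2 - of_real ((cmod c)\<^sup>2)"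
  shows "cnj c * (u a z *v w) $ 1 + \<i> * (z - q) * (u a z *v w) $ 2
       = exp (\<i> * q * of_real a) * (cnj c * w $ 1 + \<i> * (z - q) * w $ 2)"
proof -
  let ?f = "\<lambda>v::complex^2. cnj c * v $ 1 + \<i> * (z - q) * v $ 2"
  have "bounded_linear ?f"
    by (intro bounded_linear_add bounded_linear_compose[OF bounded_linear_mult_right]
        bounded_linear_vec_nth)
  moreover have "?f (dirac_coeff c a z x *v v) = \<i> * q * ?f v" if "x \<in> {0<..<a}" for x v
  proof -
    have x: "0 \<le> x" "x \<le> a"
      using that by auto
    have "z * z = q * q + c * cnj c" "\<i> * \<i> = (-1 :: complex)"
      using q complex_norm_square[of c] by (simp_all add: power2_eq_square)
    then show ?thesis
      unfolding dirac_coeff_inside[OF x] by algebra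
  qed
  ultimately have "?f (u a z *v w) = exp (\<i> * q * of_real (a - 0)) * ?f (u 0 z *v w)"
    using fundamental_solution_on_interval[OF fs order_refl, where t = a and z = z and w = w]
      \<open>a \<ge> 0\<close>
    by (intro bounded_linear_solution_exp) auto
  moreover have "u 0 z = mat 1"
    using fs by (simp add: fundamental_solution_def)
  ultimately show ?thesis
    by simp
qed

text \<open>Subtracting the eigen-relations for \<open>q\<close> and \<open>- q\<close> isolates the second component at \<open>a\<close>.\<close>

lemma dirac_transfer_identity:
  fixes u :: "real \<Rightarrow> complex \<Rightarrow> complex^2^2"
  assumes fs: "fundamental_solution (dirac_coeff c a) a u" and "a \<ge> 0"
    and q: "q\<^sup>2 = z\<^sup>2 - of_real ((cmod c)\<^sup>2)"
  shows "2 * q * exp (\<i> * q * of_real a) * (u a z *v vector [1, p]) $ 2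
       = \<i> * cnj c * (exp (2 * \<i> * of_real a * q) - 1)
         + p * (z + q - (z - q) * exp (2 * \<i> * of_real a * q))"
proof -
  let ?y = "u a z *v vector [1, p]"
  have "cnj c * ?y $ 1 + \<i> * (z - q) * ?y $ 2
        = exp (\<i> * q * of_real a) * (cnj c + \<i> * (z - q) * p)"
    using dirac_solution_inside[OF fs \<open>a \<ge> 0\<close> q] by simp
  moreover have "cnj c * ?y $ 1 + \<i> * (z + q) * ?y $ 2
        = exp (- \<i> * q * of_real a) * (cnj c + \<i> * (z + q) * p)"
    using dirac_solution_inside[OF fs \<open>a \<ge> 0\<close>, of "- q"] q by simp
  moreover have "exp (\<i> * q * of_real a) * exp (- \<i> * q * of_real a) = 1"
    by (simp flip: exp_add)
  moreover have "exp (\<i> * q * of_real a) * exp (\<i> * q * of_real a) = exp (2 * \<i> * of_real a * q)"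
    by (simp add: algebra_simps flip: exp_add)
  moreover have "\<i> * \<i> = (-1 :: complex)"
    by simp
  ultimately show ?thesis
    by algebra
qed

lemma dirac_solution_outside:
  fixes u :: "real \<Rightarrow> complex \<Rightarrow> complex^2^2" and x :: real
  assumes fs: "fundamental_solution (dirac_coeff c a) a u" and "a \<ge> 0" and "x \<ge> a"
  shows "(u x z *v w) $ 1 = exp (\<i> * z * of_real (x - a)) * (u a z *v w) $ 1"
    and "(u x z *v w) $ 2 = exp (- \<i> * z * of_real (x - a)) * (u a z *v w) $ 2"
proof -
  note sol = fundamental_solution_on_interval[OF fs \<open>a \<ge> 0\<close>, where t = x and z = z and w = w]
  show "(u x z *v w) $ 1 = exp (\<i> * z * of_real (x - a)) * (u a z *v w) $ 1"
    by (rule bounded_linear_solution_exp[OF bounded_linear_vec_nth \<open>x \<ge> a\<close> sol])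
       (auto simp: dirac_coeff_outside)
  show "(u x z *v w) $ 2 = exp (- \<i> * z * of_real (x - a)) * (u a z *v w) $ 2"
    by (rule bounded_linear_solution_exp[OF bounded_linear_vec_nth \<open>x \<ge> a\<close> sol])
       (auto simp: dirac_coeff_outside)
qed

lemma not_set_integrable_one_Ici: "\<not> set_integrable lborel {a::real..} (\<lambda>_. 1::real)"
proof
  assume "set_integrable lborel {a..} (\<lambda>_. 1::real)"
  then have "emeasure lborel {a..} < \<infinity>"
    by (simp add: set_integrable_def integrable_indicator_iff)
  define m where "m = measure lborel {a..}"
  have "emeasure lborel {a..} = ennreal m"
    using \<open>emeasure lborel {a..} < \<infinity>\<close>
    by (simp add: m_def emeasure_eq_ennreal_measure less_top)
  moreover have "emeasure lborel {a..a + (m + 1)} \<le> emeasure lborel {a..}"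
    by (rule emeasure_mono) auto
  moreover have "m \<ge> 0"
    by (simp add: m_def)
  ultimately show False
    by (simp add: ennreal_le_iff)
qed

lemma set_integrable_const_Ici_iff:
  "set_integrable lborel {a::real..} (\<lambda>_. K::real) \<longleftrightarrow> K = 0"
  using set_integrable_mult_right_iff[of K lborel "{a..}" "\<lambda>_. 1::real"]
    not_set_integrable_one_Ici[of a]
  by (cases "K = 0") (auto simp: set_integrable_def)

lemma set_integrable_exp_Ici:
  fixes k c :: real
  assumes "k > 0"
  shows "set_integrable lborel {c..} (\<lambda>x. exp (- k * x))"
proof -
  have "(\<lambda>x. exp (- k * x)) absolutely_integrable_on {c..}"
    using assms
    by (intro nonnegative_absolutely_integrable_1 integrable_on_exp_minus_to_infinity) auto
  then show ?thesis
    by (simp add: absolutely_integrable_on_def set_integrable_def integrable_completion)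
qed

lemma set_integrable_exp_combination_Ici_iff:
  fixes A B k a :: real
  assumes "k > 0" "A \<ge> 0" "B \<ge> 0"
  shows "set_integrable lborel {a..} (\<lambda>x. A * exp (- k * (x - a)) + B * exp (k * (x - a)))
         \<longleftrightarrow> B = 0"
    (is "set_integrable lborel {a..} ?F \<longleftrightarrow> _")
proof
  assume "set_integrable lborel {a..} ?F"
  then have "set_integrable lborel {a..} (\<lambda>_. B)"
  proof (rule set_integrable_bound)
    show "set_borel_measurable lborel {a..} (\<lambda>_. B)"
      by (simp add: set_borel_measurable_def)
    have "B \<le> ?F x" if "x \<ge> a" for x
    proof -
      have "B \<le> B * exp (k * (x - a))"
        using that assms by (simp add: mult_le_cancel_left1)
      then show ?thesis
        using assms by (smt (verit) exp_gt_zero mult_nonneg_nonneg)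
    qed
    then show "AE x in lborel. x \<in> {a..} \<longrightarrow> norm B \<le> norm (?F x)"
      using assms by (intro AE_I2) auto
  qed
  then show "B = 0"
    by (simp add: set_integrable_const_Ici_iff)
next
  assume "B = 0"
  have "set_integrable lborel {a..} (\<lambda>x. (A * exp (k * a)) * exp (- k * x))"
    using set_integrable_exp_Ici[OF \<open>k > 0\<close>] by simp
  moreover have "(A * exp (k * a)) * exp (- k * x) = ?F x" for x
    using \<open>B = 0\<close> by (simp add: algebra_simps flip: exp_add)
  ultimately show "set_integrable lborel {a..} ?F"
    by simp
qed

lemma set_integrable_Ioi_iff_Ici:
  fixes F :: "real \<Rightarrow> real"
  assumes F: "continuous_on {0..} F" and "a > 0"
  shows "set_integrable lborel {0<..} F \<longleftrightarrow> set_integrable lborel {a..} F"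
proof
  show "set_integrable lborel {0<..} F \<Longrightarrow> set_integrable lborel {a..} F"
    by (rule set_integrable_subset) (use \<open>a > 0\<close> in auto)
next
  assume "set_integrable lborel {a..} F"
  moreover have "set_integrable lborel {0..a} F"
    by (rule borel_integrable_atLeastAtMost'[OF continuous_on_subset[OF F]]) auto
  ultimately have "set_integrable lborel ({0..a} \<union> {a..}) F"
    by (intro set_integrable_Un) auto
  then show "set_integrable lborel {0<..} F"
    by (rule set_integrable_subset) auto
qed

lemma norm_power2_vec2: "(norm (v :: complex^2))\<^sup>2 = (cmod (v $ 1))\<^sup>2 + (cmod (v $ 2))\<^sup>2"
  by (simp add: norm_vec_def L2_set_def sum_2)

lemma square_integrable_on_Ioi_iff:
  fixes y :: "real \<Rightarrow> complex^2" and z :: complex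
  assumes cont: "continuous_on {0..} y" and "a > 0" and "Im z > 0"
    and y1: "\<And>x. x \<ge> a \<Longrightarrow> y x $ 1 = exp (\<i> * z * of_real (x - a)) * y a $ 1"
    and y2: "\<And>x. x \<ge> a \<Longrightarrow> y x $ 2 = exp (- \<i> * z * of_real (x - a)) * y a $ 2"
  shows "square_integrable_on y {0<..} \<longleftrightarrow> y a $ 2 = 0"
proof -
  let ?F = "\<lambda>x. (norm (y x))\<^sup>2"
  have "set_borel_measurable lborel {0<..} y"
    unfolding set_borel_measurable_def measurable_lborel2
    by (rule borel_measurable_continuous_on_indicator) (auto intro: continuous_on_subset[OF cont])
  then have "square_integrable_on y {0<..} \<longleftrightarrow> set_integrable lborel {a..} ?F"
    unfolding square_integrable_on_def
    using set_integrable_Ioi_iff_Ici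
            [OF continuous_on_power[OF continuous_on_norm[OF cont]] \<open>a > 0\<close>]
    by simp
  also have "\<dots> \<longleftrightarrow> set_integrable lborel {a..} (\<lambda>x.
      (cmod (y a $ 1))\<^sup>2 * exp (- (2 * Im z) * (x - a))
      + (cmod (y a $ 2))\<^sup>2 * exp ((2 * Im z) * (x - a)))"
  proof (rule set_integrable_cong)
    fix x assume "x \<in> {a..}"
    then have "a \<le> x" by simp
    show "?F x = (cmod (y a $ 1))\<^sup>2 * exp (- (2 * Im z) * (x - a))
                      + (cmod (y a $ 2))\<^sup>2 * exp ((2 * Im z) * (x - a))"
      by (simp add: norm_power2_vec2 y1[OF \<open>a \<le> x\<close>] y2[OF \<open>a \<le> x\<close>] norm_mult
          power_mult_distrib norm_exp_eq_Re mult_ac flip: exp_of_nat_mult)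
  qed auto
  also have "\<dots> \<longleftrightarrow> (cmod (y a $ 2))\<^sup>2 = 0"
    using \<open>Im z > 0\<close> by (intro set_integrable_exp_combination_Ici_iff) auto
  finally show ?thesis
    by simp
qed

lemma square_integrable_dirac_solution_iff:
  fixes u :: "real \<Rightarrow> complex \<Rightarrow> complex^2^2"
  assumes fs: "fundamental_solution (dirac_coeff c a) a u" and "a > 0" and z: "Im z > 0"
  shows "square_integrable_on (\<lambda>x. u x z *v vector [1, p]) {0<..}
         \<longleftrightarrow> p = psi c a z ((cmod c)\<^sup>2)"
proof -
  have "a \<ge> 0"
    using \<open>a > 0\<close> by simp
  define q where "q = qroot z ((cmod c)\<^sup>2)"
  define E where "E = exp (2 * \<i> * of_real a * q)"
  define D where "D = z + q - (z - q) * E"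
  have q2: "q\<^sup>2 = z\<^sup>2 - of_real ((cmod c)\<^sup>2)" and "Im q > 0"
    using qroot_power2[OF z] Im_qroot_pos[OF z] by (simp_all add: q_def)
  then have "D \<noteq> 0"
    unfolding D_def E_def using psi_denominator_nonzero[OF z \<open>Im q > 0\<close> _ \<open>a > 0\<close>] by simp
  have "square_integrable_on (\<lambda>x. u x z *v vector [1, p]) {0<..}
        \<longleftrightarrow> (u a z *v vector [1, p]) $ 2 = 0"
    using dirac_solution_outside[OF fs \<open>a \<ge> 0\<close>]
    by (intro square_integrable_on_Ioi_iff
          [OF fundamental_solution_continuous_on[OF fs] \<open>a > 0\<close> z])
  also have "\<dots> \<longleftrightarrow> \<i> * cnj c * (E - 1) + p * D = 0"
    using dirac_transfer_identity[OF fs \<open>a \<ge> 0\<close> q2, of p] \<open>Im q > 0\<close>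
    by (auto simp: E_def D_def)
  also have "\<dots> \<longleftrightarrow> p = \<i> * cnj c * (1 - E) / D"
    using \<open>D \<noteq> 0\<close> by (auto simp: field_simps)
  also have "\<i> * cnj c * (1 - E) / D = psi c a z ((cmod c)\<^sup>2)"
    by (simp add: psi_def Let_def q_def E_def D_def)
  finally show ?thesis .
qed

theorem lemmaA6:
  fixes a :: real and c :: complex and u :: "real \<Rightarrow> complex \<Rightarrow> complex^2^2"
  assumes "a > 0" and "c \<noteq> 0"
    and "fundamental_solution (dirac_coeff c a) a u"
  shows "weyl_property u (\<lambda>z. psi c a z ((cmod c)\<^sup>2))
         \<and> (\<forall>\<phi>. weyl_property u \<phi> \<longrightarrow>
               (\<forall>z. Im z > 0 \<longrightarrow> \<phi> z = psi c a z ((cmod c)\<^sup>2)))"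
  using psi_holomorphic[OF \<open>a > 0\<close>, of "(cmod c)\<^sup>2" c]
    square_integrable_dirac_solution_iff[OF assms(3,1)]
  unfolding weyl_property_def by auto

end
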